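(* Let $\mathcal G$ be a finite connected groupoid and $\alpha=(S_g,\alpha_g)_{g\in\mathcal G}$ a unital group-type partial action of $\mathcal G$ on a ring $S=\bigoplus_{y\in\mathcal G_0}S_y$, with $S_g=S1_g$ and $1_g\neq0$ for all $g\in\mathcal G$. Let $\mathcal H\in\mathrm{wSub}_\alpha(\mathcal G)$, with connected components $\mathcal H_1,\dots,\mathcal H_r$ having object sets $Y_1,\dots,Y_r$ (so $\mathcal G_0=Y_1\,\dot\cup\cdots\dot\cup\,Y_r$). For each $j$ choose $y_j\in Y_j$ and a transversal $\tau_j=\{\tau_{j,z}\}_{z\in Y_j}$ in $\mathcal H_j$ for $y_j$ satisfying $S_{\tau_{j,z}^{-1}}=S_{y_j}$ and $S_{\tau_{j,z}}=S_z$ for all $z\in Y_j$. Let $T=S^{\alpha_{\mathcal H}}$ and $T_{y_j}=S_{y_j}^{\alpha_{\mathcal H_j(y_j)}}$. Then for $g\in\mathcal G$: $g\in\mathcal G_T$ if and only if there exists $1\le k\le r$ such that $s(g),t(g)\in Y_k$ and $\tau_k(g):=\tau_{k,t(g)}^{-1}g\,\tau_{k,s(g)}\in\mathcal G(y_k)_{T_{y_k}}$.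
   Context: A groupoid is a small category with all morphisms invertible; $\mathcal G_0$ is its object set (identified with identity morphisms), $s(g),t(g)$ source and target, $\mathcal G(x,y)=\{g:s(g)=x,t(g)=y\}$, $\mathcal G(x)=\mathcal G(x,x)$; $gh$ defined iff $s(g)=t(h)$; connected means all $\mathcal G(x,y)\ne\emptyset$; connected components are full subgroupoids on classes of $x\sim y\iff\mathcal G(x,y)\neq\emptyset$. A partial action $\alpha=(S_g,\alpha_g)_{g\in\mathcal G}$ on a ring $S$: for each $g$, $S_{t(g)}$ is an ideal of $S$, $S_g$ an ideal of $S_{t(g)}$, $\alpha_g:S_{g^{-1}}\to S_g$ a ring isomorphism; $\alpha_x=\mathrm{id}_{S_x}$; for composable $(g,h)$, $\alpha_h^{-1}(S_{g^{-1}}\cap S_h)\subseteq S_{(gh)^{-1}}$ and $\alpha_g\alpha_h(a)=\alpha_{gh}(a)$ there. Unital: $S_g=S1_g$, $1_g$ central idempotent. A transversal for $x$ in a connected groupoid $\mathcal K$ is $\{\tau_y\}_{y\in\mathcal K_0}$ with $\tau_y\in\mathcal K(x,y)$, $\tau_x=x$; a partial action of connected $\mathcal K$ on $A=\bigoplus_{y\in\mathcal K_0}A_y$ is group-type if some $x$ and transversal satisfy $A_{\tau_y^{-1}}=A_x$, $A_{\tau_y}=A_y$ for all $y$; for non-connected $\mathcal K$ it is group-type if each restriction to a connected component $\mathcal K_Y$ (acting on $\bigoplus_{y\in Y}A_y$) is group-type. For a subgroupoid $\mathcal H$, $\alpha_{\mathcal H}=(S_h,\alpha_h)_{h\in\mathcal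 H}$ acts on $\bigoplus_{z\in\mathcal H_0}S_z$. $\mathrm{wSub}_\alpha(\mathcal G)$ is the set of subgroupoids $\mathcal H$ with $\mathcal H_0=\mathcal G_0$ (wide) and $\alpha_{\mathcal H}$ group-type. For a subgroupoid $\mathcal K$ and subring $A\subseteq S$, $A^{\alpha_{\mathcal K}}=\{a\in A:\alpha_k(a1_{k^{-1}})=a1_k\ \forall k\in\mathcal K\}$. For a subring $T\subseteq S$, $\mathcal G_T=\{g\in\mathcal G:\alpha_g(t1_{g^{-1}})=t1_g\ \forall t\in T\}$; for $y\in\mathcal G_0$ and a subring $B\subseteq S_y$, $\mathcal G(y)_B=\{l\in\mathcal G(y):\alpha_l(b1_{l^{-1}})=b1_l\ \forall b\in B\}$. *)

theory Defs
  imports Main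
begin

text \<open>A groupoid is given by its set of arrows; objects are identified with
identity arrows.  Composition cmp g h (= gh) is meaningful iff src g = tgt h.\<close>

record 'g groupoid =
  arr  :: "'g set"
  src  :: "'g \<Rightarrow> 'g"
  tgt  :: "'g \<Rightarrow> 'g"
  cmp  :: "'g \<Rightarrow> 'g \<Rightarrow> 'g"
  ginv :: "'g \<Rightarrow> 'g"

definition objs :: "('g, 'b) groupoid_scheme \<Rightarrow> 'g set" where
  "objs G = src G ` arr G"

definition is_groupoid :: "('g, 'b) groupoid_scheme \<Rightarrow> bool" where
  "is_groupoid G \<longleftrightarrow>
     (\<forall>g\<in>arr G. src G g \<in> arr G \<and> tgt G g \<in> arr G
        \<and> src G (src G g) = src G g \<and> tgt G (src G g) = src G g
        \<and> src G (tgt G g) = tgt G g \<and> tgt G (tgt G g) = tgt G g) \<and>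
     (\<forall>g\<in>arr G. \<forall>h\<in>arr G. src G g = tgt G h \<longrightarrow>
        cmp G g h \<in> arr G \<and> src G (cmp G g h) = src G h \<and> tgt G (cmp G g h) = tgt G g) \<and>
     (\<forall>f\<in>arr G. \<forall>g\<in>arr G. \<forall>h\<in>arr G. src G f = tgt G g \<longrightarrow> src G g = tgt G h \<longrightarrow>
        cmp G (cmp G f g) h = cmp G f (cmp G g h)) \<and>
     (\<forall>g\<in>arr G. cmp G (tgt G g) g = g \<and> cmp G g (src G g) = g) \<and>
     (\<forall>g\<in>arr G. ginv G g \<in> arr G \<and> src G (ginv G g) = tgt G g \<and> tgt G (ginv G g) = src G g
        \<and> cmp G g (ginv G g) = tgt G g \<and> cmp G (ginv G g) g = src G g)"

definition connected_groupoid :: "('g, 'b) groupoid_scheme \<Rightarrow> bool" where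
  "connected_groupoid G \<longleftrightarrow>
     (\<forall>x\<in>objs G. \<forall>y\<in>objs G. \<exists>g\<in>arr G. src G g = x \<and> tgt G g = y)"

definition subgroupoid :: "('g, 'b) groupoid_scheme \<Rightarrow> 'g set \<Rightarrow> bool" where
  "subgroupoid G H \<longleftrightarrow> H \<subseteq> arr G \<and>
     (\<forall>h\<in>H. src G h \<in> H \<and> tgt G h \<in> H \<and> ginv G h \<in> H) \<and>
     (\<forall>h\<in>H. \<forall>k\<in>H. src G h = tgt G k \<longrightarrow> cmp G h k \<in> H)"

definition sub_objs :: "('g, 'b) groupoid_scheme \<Rightarrow> 'g set \<Rightarrow> 'g set" where
  "sub_objs G H = src G ` H"

definition components :: "('g, 'b) groupoid_scheme \<Rightarrow> 'g set \<Rightarrow> 'g set set" where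
  "components G H =
     {{z \<in> sub_objs G H. \<exists>h\<in>H. src G h = x \<and> tgt G h = z} | x. x \<in> sub_objs G H}"

definition restr :: "('g, 'b) groupoid_scheme \<Rightarrow> 'g set \<Rightarrow> 'g set \<Rightarrow> 'g set" where
  "restr G H Y = {h \<in> H. src G h \<in> Y \<and> tgt G h \<in> Y}"

definition ideal_in :: "'r::ring set \<Rightarrow> 'r set \<Rightarrow> bool" where
  "ideal_in I R \<longleftrightarrow> I \<subseteq> R \<and> 0 \<in> I \<and> (\<forall>a\<in>I. \<forall>b\<in>I. a + b \<in> I) \<and> (\<forall>a\<in>I. - a \<in> I) \<and>
     (\<forall>r\<in>R. \<forall>a\<in>I. r * a \<in> I \<and> a * r \<in> I)"

definition ring_iso_on :: "('r::ring \<Rightarrow> 'r) \<Rightarrow> 'r set \<Rightarrow> 'r set \<Rightarrow> bool" where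
  "ring_iso_on f A B \<longleftrightarrow> bij_betw f A B \<and>
     (\<forall>a\<in>A. \<forall>b\<in>A. f (a + b) = f a + f b \<and> f (a * b) = f a * f b)"

text \<open>D g is the ideal S_g, al g is alpha_g.\<close>
definition partial_action ::
  "('g, 'b) groupoid_scheme \<Rightarrow> ('g \<Rightarrow> 'r::ring set) \<Rightarrow> ('g \<Rightarrow> 'r \<Rightarrow> 'r) \<Rightarrow> bool" where
  "partial_action G D al \<longleftrightarrow>
     (\<forall>g\<in>arr G. ideal_in (D (tgt G g)) UNIV \<and> ideal_in (D g) (D (tgt G g))
        \<and> ring_iso_on (al g) (D (ginv G g)) (D g)) \<and>
     (\<forall>x\<in>objs G. \<forall>a\<in>D x. al x a = a) \<and>
     (\<forall>g\<in>arr G. \<forall>h\<in>arr G. src G g = tgt G h \<longrightarrow>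
        (\<forall>a\<in>D (ginv G h). al h a \<in> D (ginv G g) \<inter> D h \<longrightarrow>
           a \<in> D (ginv G (cmp G g h)) \<and> al g (al h a) = al (cmp G g h) a))"

text \<open>Unital: S_g = S 1_g with 1_g a central idempotent.\<close>
definition unital_pa ::
  "('g, 'b) groupoid_scheme \<Rightarrow> ('g \<Rightarrow> 'r::ring set) \<Rightarrow> ('g \<Rightarrow> 'r) \<Rightarrow> bool" where
  "unital_pa G D e \<longleftrightarrow>
     (\<forall>g\<in>arr G. D g = {a * e g | a. True} \<and> e g * e g = e g \<and> (\<forall>a. a * e g = e g * a))"

definition internal_direct_sum :: "'g set \<Rightarrow> ('g \<Rightarrow> 'r::ring set) \<Rightarrow> bool" where
  "internal_direct_sum Y D \<longleftrightarrow>
     (\<forall>a. \<exists>f. (\<forall>y\<in>Y. f y \<in> D y) \<and> a = (\<Sum>y\<in>Y. f y)) \<and>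
     (\<forall>f f'. (\<forall>y\<in>Y. f y \<in> D y) \<longrightarrow> (\<forall>y\<in>Y. f' y \<in> D y) \<longrightarrow>
        (\<Sum>y\<in>Y. f y) = (\<Sum>y\<in>Y. f' y) \<longrightarrow> (\<forall>y\<in>Y. f y = f' y))"

definition group_type_conn ::
  "('g, 'b) groupoid_scheme \<Rightarrow> 'g set \<Rightarrow> 'g set \<Rightarrow> ('g \<Rightarrow> 'r set) \<Rightarrow> bool" where
  "group_type_conn G K Y D \<longleftrightarrow>
     (\<exists>x\<in>Y. \<exists>tau. tau x = x \<and>
        (\<forall>y\<in>Y. tau y \<in> K \<and> src G (tau y) = x \<and> tgt G (tau y) = y
               \<and> D (ginv G (tau y)) = D x \<and> D (tau y) = D y))"

definition group_type ::
  "('g, 'b) groupoid_scheme \<Rightarrow> 'g set \<Rightarrow> ('g \<Rightarrow> 'r set) \<Rightarrow> bool" where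
  "group_type G H D \<longleftrightarrow> (\<forall>Y\<in>components G H. group_type_conn G (restr G H Y) Y D)"

definition wSub :: "('g, 'b) groupoid_scheme \<Rightarrow> ('g \<Rightarrow> 'r set) \<Rightarrow> 'g set set" where
  "wSub G D = {H. subgroupoid G H \<and> sub_objs G H = objs G \<and> group_type G H D}"

definition fixed_ring ::
  "'g set \<Rightarrow> ('g, 'b) groupoid_scheme \<Rightarrow> ('g \<Rightarrow> 'r \<Rightarrow> 'r) \<Rightarrow> ('g \<Rightarrow> 'r::ring) \<Rightarrow> 'r set \<Rightarrow> 'r set" where
  "fixed_ring K G al e A = {a \<in> A. \<forall>k\<in>K. al k (a * e (ginv G k)) = a * e k}"

definition stab_arr ::
  "('g, 'b) groupoid_scheme \<Rightarrow> ('g \<Rightarrow> 'r \<Rightarrow> 'r) \<Rightarrow> ('g \<Rightarrow> 'r::ring) \<Rightarrow> 'r set \<Rightarrow> 'g set" where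
  "stab_arr G al e T = {g \<in> arr G. \<forall>t\<in>T. al g (t * e (ginv G g)) = t * e g}"

definition stab_iso ::
  "('g, 'b) groupoid_scheme \<Rightarrow> ('g \<Rightarrow> 'r \<Rightarrow> 'r) \<Rightarrow> ('g \<Rightarrow> 'r::ring) \<Rightarrow> 'g \<Rightarrow> 'r set \<Rightarrow> 'g set" where
  "stab_iso G al e y B = {l \<in> arr G. src G l = y \<and> tgt G l = y \<and>
      (\<forall>b\<in>B. al l (b * e (ginv G l)) = b * e l)}"

end

theory Submission
  imports Defs
begin

text \<open>
Every transversal arrow tau is global: alpha_tau is an isomorphism from all of S_(s tau) onto
all of S_(t tau), and composing with a global arrow is exact, i.e. alpha_(g tau) = alpha_g o alpha_tau
on the whole domain of alpha_(g tau). Hence, whenever a 1_z = alpha_(tau_z) (a 1_(y_k)) for the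
endpoints z of g in Y_k (true for every a in T), g fixes a iff tau_k(g) fixes a 1_(y_k).
Conversely every b in T_(y_k) equals a 1_(y_k) for a = sum of alpha_(tau_z) b over z in Y_k, an
element of T vanishing off Y_k. Taking b = 1_(y_k) shows that an arrow fixing T cannot leave its
component, since it would send 1_(g^-1) to 1_g = 0.
\<close>

locale groupoid =
  fixes G :: "('g, 'b) groupoid_scheme"
  assumes groupoid: "is_groupoid G"
begin

lemma
  assumes "g \<in> arr G"
  shows arr_src: "src G g \<in> arr G" and arr_tgt: "tgt G g \<in> arr G"
    and src_src: "src G (src G g) = src G g" and tgt_src: "tgt G (src G g) = src G g"
    and src_tgt: "src G (tgt G g) = tgt G g"
    and cmp_tgt_left: "cmp G (tgt G g) g = g" and cmp_src_right: "cmp G g (src G g) = g"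
    and arr_ginv: "ginv G g \<in> arr G"
    and src_ginv: "src G (ginv G g) = tgt G g" and tgt_ginv: "tgt G (ginv G g) = src G g"
    and cmp_ginv_right: "cmp G g (ginv G g) = tgt G g"
    and cmp_ginv_left: "cmp G (ginv G g) g = src G g"
  using groupoid assms unfolding is_groupoid_def by blast+

lemma
  assumes "g \<in> arr G" "h \<in> arr G" "src G g = tgt G h"
  shows arr_cmp: "cmp G g h \<in> arr G"
    and src_cmp: "src G (cmp G g h) = src G h" and tgt_cmp: "tgt G (cmp G g h) = tgt G g"
  using groupoid assms unfolding is_groupoid_def by blast+

lemma cmp_assoc:
  "\<lbrakk>f \<in> arr G; g \<in> arr G; h \<in> arr G; src G f = tgt G g; src G g = tgt G h\<rbrakk>
    \<Longrightarrow> cmp G (cmp G f g) h = cmp G f (cmp G g h)"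
  using groupoid unfolding is_groupoid_def by blast

lemmas arr_simps = arr_src arr_tgt src_src tgt_src src_tgt
  arr_ginv src_ginv tgt_ginv arr_cmp src_cmp tgt_cmp

lemma ginv_ginv:
  assumes g: "g \<in> arr G"
  shows "ginv G (ginv G g) = g"
proof -
  let ?i = "ginv G g"
  have "ginv G ?i = cmp G (ginv G ?i) (cmp G ?i g)"
    using g cmp_src_right[of "ginv G ?i"] by (simp add: arr_simps cmp_ginv_left)
  also have "\<dots> = cmp G (cmp G (ginv G ?i) ?i) g"
    using g by (simp add: cmp_assoc arr_simps)
  also have "\<dots> = g"
    using g by (simp add: arr_simps cmp_ginv_left cmp_tgt_left)
  finally show ?thesis .
qed

lemma cmp_ginv_cancel_right:
  "\<lbrakk>g \<in> arr G; h \<in> arr G; src G g = tgt G h\<rbrakk> \<Longrightarrow> cmp G (cmp G g h) (ginv G h) = g"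
  by (metis cmp_assoc arr_ginv tgt_ginv cmp_ginv_right cmp_src_right)

lemma cmp_ginv_cancel_left:
  "\<lbrakk>g \<in> arr G; h \<in> arr G; src G h = tgt G g\<rbrakk> \<Longrightarrow> cmp G (ginv G h) (cmp G h g) = g"
  by (metis cmp_assoc arr_ginv src_ginv cmp_ginv_left cmp_tgt_left)

lemma objs_arr: "x \<in> objs G \<Longrightarrow> x \<in> arr G"
  unfolding objs_def by (auto simp: arr_src)

lemma src_in_objs: "g \<in> arr G \<Longrightarrow> src G g \<in> objs G"
  and tgt_in_objs: "g \<in> arr G \<Longrightarrow> tgt G g \<in> objs G"
  unfolding objs_def by (auto intro!: image_eqI[of _ _ "tgt G g"] simp: src_tgt arr_tgt)

lemma components_subset: "C \<in> components G H \<Longrightarrow> C \<subseteq> sub_objs G H"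
  unfolding components_def by blast

lemma component_tgt_closed:
  assumes H: "subgroupoid G H" and C: "C \<in> components G H" and h: "h \<in> H" and hs: "src G h \<in> C"
  shows "tgt G h \<in> C"
proof -
  obtain x where C_eq: "C = {z \<in> sub_objs G H. \<exists>h\<in>H. src G h = x \<and> tgt G h = z}"
    using C unfolding components_def by (simp only: mem_Collect_eq) blast
  obtain h' where h': "h' \<in> H" "src G h' = x" "tgt G h' = src G h" using hs unfolding C_eq by blast
  have ha: "h \<in> arr G" "h' \<in> arr G" and hh': "cmp G h h' \<in> H" and hi: "ginv G h \<in> H"
    using H h h' unfolding subgroupoid_def by auto
  have "src G (cmp G h h') = x" "tgt G (cmp G h h') = tgt G h"
    using src_cmp[OF ha] tgt_cmp[OF ha] h' by auto
  moreover have "tgt G h \<in> sub_objs G H" unfolding sub_objs_def using hi src_ginv[OF ha(1)] by force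
  ultimately show ?thesis unfolding C_eq using hh' by blast
qed

lemma component_src_closed:
  assumes H: "subgroupoid G H" and C: "C \<in> components G H" and h: "h \<in> H" and ht: "tgt G h \<in> C"
  shows "src G h \<in> C"
proof -
  have "h \<in> arr G" "ginv G h \<in> H" using H h unfolding subgroupoid_def by auto
  then show ?thesis using component_tgt_closed[OF H C, of "ginv G h"] ht by (simp add: src_ginv tgt_ginv)
qed

lemma in_some_component:
  assumes H: "subgroupoid G H" and z: "z \<in> sub_objs G H"
  obtains C where "C \<in> components G H" "z \<in> C"
proof
  let ?C = "{z' \<in> sub_objs G H. \<exists>h\<in>H. src G h = z \<and> tgt G h = z'}"
  show "?C \<in> components G H"
    unfolding components_def by (intro CollectI exI[of _ z] conjI refl z)
  obtain h where h: "h \<in> H" "z = src G h" using z unfolding sub_objs_def by blast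
  have hs: "src G h \<in> H" and ha: "h \<in> arr G" using H h(1) unfolding subgroupoid_def by auto
  have "src G (src G h) = z" "tgt G (src G h) = z" using h(2) src_src[OF ha] tgt_src[OF ha] by auto
  then show "z \<in> ?C" using z hs by blast
qed

end

lemma ring_iso_on_maps_unit:
  assumes iso: "ring_iso_on f A B" and I: "I \<subseteq> A" "f ` I = J"
    and u: "u \<in> I" "\<forall>a\<in>I. a * u = a" and v: "v \<in> J" "\<forall>b\<in>J. v * b = b"
  shows "f u = v"
proof -
  obtain a where a: "a \<in> I" "v = f a" using I v(1) by blast
  have "v = f (a * u)" using a u by simp
  also have "\<dots> = v * f u" using iso a u(1) I(1) unfolding ring_iso_on_def by blast
  also have "\<dots> = f u" using v u I by blast
  finally show ?thesis by simp
qed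

locale unital_partial_action = groupoid G for G :: "('g, 'b) groupoid_scheme" +
  fixes D :: "'g \<Rightarrow> 'r::ring set" and al :: "'g \<Rightarrow> 'r \<Rightarrow> 'r" and e :: "'g \<Rightarrow> 'r"
  assumes partial_action: "partial_action G D al" and unital: "unital_pa G D e"
begin

definition stabilizes :: "'g \<Rightarrow> 'r \<Rightarrow> bool" where
  "stabilizes g a \<longleftrightarrow> al g (a * e (ginv G g)) = a * e g"

lemma
  assumes "g \<in> arr G"
  shows D_eq: "D g = {a * e g | a. True}" and e_idem: "e g * e g = e g"
    and e_central: "a * e g = e g * a"
  using unital assms unfolding unital_pa_def by blast+

lemma mem_D_iff:
  assumes g: "g \<in> arr G"
  shows "a \<in> D g \<longleftrightarrow> a * e g = a"
proof
  assume "a \<in> D g"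
  then obtain c where "a = c * e g" using D_eq[OF g] by blast
  then show "a * e g = a" using e_idem[OF g] by (simp add: mult.assoc)
next
  assume "a * e g = a"
  then show "a \<in> D g" using D_eq[OF g] by (metis (mono_tags, lifting) mem_Collect_eq)
qed

lemma
  assumes "g \<in> arr G"
  shows e_mem_D: "e g \<in> D g" and zero_mem_D: "0 \<in> D g"
  using assms by (simp_all add: mem_D_iff e_idem)

lemma
  assumes g: "g \<in> arr G" and a: "a \<in> D g"
  shows mult_e_right: "a * e g = a" and mult_e_left: "e g * a = a"
    and mult_mem_D_left: "c * a \<in> D g" and mult_mem_D_right: "a * c \<in> D g"
proof -
  show *: "a * e g = a" using mem_D_iff g a by blast
  then show "e g * a = a" using e_central[OF g] by simp
  show "c * a \<in> D g" using * g by (simp add: mem_D_iff mult.assoc)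
  have "a * c * e g = a * e g * c" using e_central[OF g, of c] by (simp add: mult.assoc)
  then show "a * c \<in> D g" using * g by (simp add: mem_D_iff)
qed

lemma e_mult_e_subset:
  "\<lbrakk>g \<in> arr G; h \<in> arr G; D h \<subseteq> D g\<rbrakk> \<Longrightarrow> e g * e h = e h"
  by (rule mult_e_left) (auto simp: e_mem_D)

lemma e_eqI:
  assumes "g \<in> arr G" "h \<in> arr G" "D g = D h"
  shows "e g = e h"
proof -
  have "e g = e h * e g" using e_mult_e_subset[OF assms(2,1)] assms(3) by simp
  also have "\<dots> = e g * e h" using e_central[OF assms(1)] by simp
  also have "\<dots> = e h" using e_mult_e_subset[OF assms(1,2)] assms(3) by simp
  finally show ?thesis .
qed

lemma D_subset_tgt:
  assumes "g \<in> arr G"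
  shows "D g \<subseteq> D (tgt G g)"
proof -
  have "ideal_in (D g) (D (tgt G g))" using partial_action assms unfolding partial_action_def by blast
  then show ?thesis unfolding ideal_in_def by blast
qed

lemma D_ginv_subset_src: "g \<in> arr G \<Longrightarrow> D (ginv G g) \<subseteq> D (src G g)"
  using D_subset_tgt[OF arr_ginv] tgt_ginv by simp

lemma al_ring_iso: "g \<in> arr G \<Longrightarrow> ring_iso_on (al g) (D (ginv G g)) (D g)"
  using partial_action unfolding partial_action_def by blast

lemma
  assumes g: "g \<in> arr G"
  shows al_image: "al g ` D (ginv G g) = D g"
    and al_inj: "\<lbrakk>a \<in> D (ginv G g); b \<in> D (ginv G g); al g a = al g b\<rbrakk> \<Longrightarrow> a = b"
    and al_add: "\<lbrakk>a \<in> D (ginv G g); b \<in> D (ginv G g)\<rbrakk> \<Longrightarrow> al g (a + b) = al g a + al g b"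
    and al_mult: "\<lbrakk>a \<in> D (ginv G g); b \<in> D (ginv G g)\<rbrakk> \<Longrightarrow> al g (a * b) = al g a * al g b"
  using al_ring_iso[OF g] unfolding ring_iso_on_def bij_betw_def inj_on_def by blast+

lemma al_mem_D: "\<lbrakk>g \<in> arr G; a \<in> D (ginv G g)\<rbrakk> \<Longrightarrow> al g a \<in> D g"
  using al_image by blast

lemma al_zero:
  assumes g: "g \<in> arr G"
  shows "al g 0 = 0"
proof -
  have "al g (0 + 0) = al g 0 + al g 0" using al_add[OF g] zero_mem_D[OF arr_ginv[OF g]] by blast
  then show ?thesis by simp
qed

lemma al_e: "g \<in> arr G \<Longrightarrow> al g (e (ginv G g)) = e g"
  by (rule ring_iso_on_maps_unit[OF al_ring_iso order_refl al_image])
    (auto simp: arr_ginv e_mem_D mult_e_right mult_e_left)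

lemma al_obj: "\<lbrakk>x \<in> objs G; a \<in> D x\<rbrakk> \<Longrightarrow> al x a = a"
  using partial_action unfolding partial_action_def by simp

lemma al_cmp:
  assumes "g \<in> arr G" "h \<in> arr G" "src G g = tgt G h" "a \<in> D (ginv G h)" "al h a \<in> D (ginv G g)"
  shows "a \<in> D (ginv G (cmp G g h))" "al g (al h a) = al (cmp G g h) a"
proof -
  have "\<forall>g\<in>arr G. \<forall>h\<in>arr G. src G g = tgt G h \<longrightarrow>
        (\<forall>a\<in>D (ginv G h). al h a \<in> D (ginv G g) \<inter> D h \<longrightarrow>
           a \<in> D (ginv G (cmp G g h)) \<and> al g (al h a) = al (cmp G g h) a)"
    using partial_action unfolding partial_action_def by (elim conjE)
  then show "a \<in> D (ginv G (cmp G g h))" "al g (al h a) = al (cmp G g h) a"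
    using assms al_mem_D[OF assms(2,4)] by simp_all
qed

lemma al_ginv_al:
  assumes g: "g \<in> arr G" and a: "a \<in> D (ginv G g)"
  shows "al (ginv G g) (al g a) = a"
proof -
  have "al g a \<in> D (ginv G (ginv G g))" using al_mem_D[OF g a] ginv_ginv[OF g] by simp
  then have "al (ginv G g) (al g a) = al (cmp G (ginv G g) g) a"
    using al_cmp(2)[OF arr_ginv[OF g] g _ a] g src_ginv by simp
  also have "\<dots> = a"
    using al_obj[OF src_in_objs[OF g]] D_ginv_subset_src[OF g] a cmp_ginv_left[OF g] by auto
  finally show ?thesis .
qed

lemma mem_fixed_ring_iff: "a \<in> fixed_ring K G al e A \<longleftrightarrow> a \<in> A \<and> (\<forall>k\<in>K. stabilizes k a)"
  unfolding fixed_ring_def stabilizes_def by blast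

lemma mem_stab_arr_iff: "g \<in> stab_arr G al e B \<longleftrightarrow> g \<in> arr G \<and> (\<forall>b\<in>B. stabilizes g b)"
  unfolding stab_arr_def stabilizes_def by blast

lemma mem_stab_iso_iff:
  "l \<in> stab_iso G al e x B \<longleftrightarrow> l \<in> arr G \<and> src G l = x \<and> tgt G l = x \<and> (\<forall>b\<in>B. stabilizes l b)"
  unfolding stab_iso_def stabilizes_def by blast

lemma stabilizes_iff_local:
  assumes g: "g \<in> arr G"
  shows "stabilizes g a \<longleftrightarrow> al g (a * e (src G g) * e (ginv G g)) = a * e (tgt G g) * e g"
proof -
  have "e (src G g) * e (ginv G g) = e (ginv G g)" "e (tgt G g) * e g = e g"
    using e_mult_e_subset arr_simps D_ginv_subset_src D_subset_tgt g by auto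
  then show ?thesis unfolding stabilizes_def by (simp add: mult.assoc)
qed

lemma
  assumes l: "l \<in> arr G" "src G l = x" "tgt G l = x"
  shows stabilizes_loop_mult_e: "stabilizes l (a * e x) \<longleftrightarrow> stabilizes l a"
    and stabilizes_loop_e: "stabilizes l (e x)"
proof -
  have x: "x \<in> arr G" using l arr_src by blast
  have "a * e x * e x = a * e x" using e_idem[OF x] by (simp add: mult.assoc)
  then show "stabilizes l (a * e x) \<longleftrightarrow> stabilizes l a"
    using stabilizes_iff_local[OF l(1)] l by simp
  have "e x * e (ginv G l) = e (ginv G l)" "e x * e l = e l"
    using e_mult_e_subset[OF x] D_ginv_subset_src[OF l(1)] D_subset_tgt[OF l(1)] l arr_ginv by auto
  then show "stabilizes l (e x)" unfolding stabilizes_def using al_e[OF l(1)] by simp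
qed

definition global_arr :: "'g \<Rightarrow> bool" where
  "global_arr h \<longleftrightarrow> h \<in> arr G \<and> D (ginv G h) = D (src G h) \<and> D h = D (tgt G h)"

lemma global_arr_ginv:
  assumes "global_arr h"
  shows "global_arr (ginv G h)"
  using assms unfolding global_arr_def by (simp add: arr_ginv src_ginv tgt_ginv ginv_ginv)

text \<open>In general alpha_g o alpha_h only restricts alpha_(gh); they agree once the domain of
alpha_h is all of S_(s h).\<close>

lemma mem_D_ginv_cmp_iff:
  assumes h: "h \<in> arr G" "D (ginv G h) = D (src G h)" and g: "g \<in> arr G" "src G g = tgt G h"
  shows "a \<in> D (ginv G (cmp G g h)) \<longleftrightarrow> a \<in> D (ginv G h) \<and> al h a \<in> D (ginv G g)"
proof
  assume a: "a \<in> D (ginv G (cmp G g h))"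
  have gh: "cmp G g h \<in> arr G" "src G (cmp G g h) = src G h" using g h by (simp_all add: arr_simps)
  have ah: "a \<in> D (ginv G h)" using a D_ginv_subset_src[OF gh(1)] gh(2) h(2) by auto
  have "al h a \<in> D (ginv G (ginv G h))" using al_mem_D[OF h(1) ah] ginv_ginv[OF h(1)] by simp
  moreover have "al (ginv G h) (al h a) = a" using al_ginv_al[OF h(1) ah] .
  ultimately have "al h a \<in> D (ginv G (cmp G (cmp G g h) (ginv G h)))"
    using al_cmp(1)[OF gh(1) arr_ginv[OF h(1)]] a gh(2) h(1) by (simp add: tgt_ginv)
  then show "a \<in> D (ginv G h) \<and> al h a \<in> D (ginv G g)"
    using ah cmp_ginv_cancel_right[OF g(1) h(1) g(2)] by simp
next
  assume "a \<in> D (ginv G h) \<and> al h a \<in> D (ginv G g)"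
  then show "a \<in> D (ginv G (cmp G g h))" using al_cmp(1)[OF g(1) h(1) g(2)] by blast
qed

lemma D_ginv_cmp_global:
  assumes h: "global_arr h" and g: "g \<in> arr G" "src G h = tgt G g"
  shows "D (ginv G (cmp G h g)) = D (ginv G g)"
proof
  have ha: "h \<in> arr G" using h unfolding global_arr_def by blast
  show "D (ginv G g) \<subseteq> D (ginv G (cmp G h g))"
  proof
    fix a assume a: "a \<in> D (ginv G g)"
    have "al g a \<in> D (ginv G h)"
      using al_mem_D[OF g(1) a] D_subset_tgt[OF g(1)] g(2) h unfolding global_arr_def by auto
    then show "a \<in> D (ginv G (cmp G h g))" using al_cmp(1)[OF ha g(1) g(2) a] by blast
  qed
  show "D (ginv G (cmp G h g)) \<subseteq> D (ginv G g)"
  proof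
    fix a assume a: "a \<in> D (ginv G (cmp G h g))"
    have hg: "cmp G h g \<in> arr G" "tgt G (cmp G h g) = tgt G h" using ha g by (simp_all add: arr_simps)
    have "al (cmp G h g) a \<in> D (ginv G (ginv G h))"
      using al_mem_D[OF hg(1) a] D_subset_tgt[OF hg(1)] hg(2) h ginv_ginv[OF ha]
      unfolding global_arr_def by auto
    then have "a \<in> D (ginv G (cmp G (ginv G h) (cmp G h g)))"
      using al_cmp(1)[OF arr_ginv[OF ha] hg(1) _ a] ha hg(2) by (simp add: src_ginv)
    then show "a \<in> D (ginv G g)" using cmp_ginv_cancel_left[OF g(1) ha g(2)] by simp
  qed
qed

lemma
  assumes g: "g \<in> arr G" and s: "global_arr s" and r: "global_arr r"
    and gs: "tgt G s = src G g" and gr: "tgt G r = tgt G g"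
  defines "l \<equiv> cmp G (cmp G (ginv G r) g) s"
  shows mem_D_ginv_conj_iff: "a \<in> D (ginv G l) \<longleftrightarrow> a \<in> D (ginv G s) \<and> al s a \<in> D (ginv G g)"
    and al_conj: "a \<in> D (ginv G l) \<Longrightarrow> al l a = al (ginv G r) (al g (al s a))"
proof -
  have sa: "s \<in> arr G" and ra: "r \<in> arr G" using s r unfolding global_arr_def by auto
  let ?m = "cmp G (ginv G r) g"
  have m: "?m \<in> arr G" "src G ?m = tgt G s" using ra g gs gr by (simp_all add: arr_simps)
  have Dm: "D (ginv G ?m) = D (ginv G g)"
    using D_ginv_cmp_global[OF global_arr_ginv[OF r] g] ra gr by (simp add: src_ginv)
  have s_src: "D (ginv G s) = D (src G s)" using s unfolding global_arr_def by blast
  show iff: "a \<in> D (ginv G l) \<longleftrightarrow> a \<in> D (ginv G s) \<and> al s a \<in> D (ginv G g)"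
    using mem_D_ginv_cmp_iff[OF sa s_src m] Dm unfolding l_def by simp
  assume "a \<in> D (ginv G l)"
  then have a: "a \<in> D (ginv G s)" "al s a \<in> D (ginv G g)" using iff by blast+
  have "al l a = al ?m (al s a)" using al_cmp(2)[OF m(1) sa m(2) a(1)] a(2) Dm unfolding l_def by simp
  also have "\<dots> = al (ginv G r) (al g (al s a))"
    using al_cmp(2)[OF arr_ginv[OF ra] g _ a(2)] al_mem_D[OF g a(2)] D_subset_tgt[OF g] gr r ginv_ginv[OF ra]
    unfolding global_arr_def by (auto simp: src_ginv)
  finally show "al l a = al (ginv G r) (al g (al s a))" .
qed

lemma
  assumes g: "g \<in> arr G" and s: "global_arr s" and r: "global_arr r"
    and gs: "tgt G s = src G g" and gr: "tgt G r = tgt G g"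
  defines "l \<equiv> cmp G (cmp G (ginv G r) g) s"
  shows al_e_conj_ginv: "al s (e (ginv G l)) = e (ginv G g)"
    and al_ginv_e_conj: "al (ginv G r) (e g) = e l"
proof -
  have sa: "s \<in> arr G" and ra: "r \<in> arr G" using s r unfolding global_arr_def by auto
  have la: "l \<in> arr G" using sa ra g gs gr unfolding l_def by (simp add: arr_simps)
  note Dl = mem_D_ginv_conj_iff[OF g s r gs gr, folded l_def]
  have image: "al s ` D (ginv G l) = D (ginv G g)"
  proof
    show "al s ` D (ginv G l) \<subseteq> D (ginv G g)" using Dl by blast
    show "D (ginv G g) \<subseteq> al s ` D (ginv G l)"
    proof
      fix c assume c: "c \<in> D (ginv G g)"
      then have "c \<in> D s" using D_ginv_subset_src[OF g] gs s unfolding global_arr_def by auto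
      then obtain a where a: "a \<in> D (ginv G s)" "c = al s a" using al_image[OF sa] by (metis imageE)
      then have "a \<in> D (ginv G l)" using Dl c by simp
      then show "c \<in> al s ` D (ginv G l)" using a(2) by (rule rev_image_eqI)
    qed
  qed
  have units: "\<forall>a\<in>D (ginv G l). a * e (ginv G l) = a" "\<forall>c\<in>D (ginv G g). e (ginv G g) * c = c"
    using mult_e_right[OF arr_ginv[OF la]] mult_e_left[OF arr_ginv[OF g]] by blast+
  have "D (ginv G l) \<subseteq> D (ginv G s)" using Dl by blast
  then show el: "al s (e (ginv G l)) = e (ginv G g)"
    using ring_iso_on_maps_unit[OF al_ring_iso[OF sa] _ image e_mem_D[OF arr_ginv[OF la]] units(1)
        e_mem_D[OF arr_ginv[OF g]] units(2)] by blast
  have "e l = al l (e (ginv G l))" using al_e[OF la] by simp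
  also have "\<dots> = al (ginv G r) (al g (e (ginv G g)))"
    using al_conj[OF g s r gs gr, folded l_def] e_mem_D[OF arr_ginv[OF la]] el by simp
  finally show "al (ginv G r) (e g) = e l" using al_e[OF g] by simp
qed

lemma stabilizes_conj_iff:
  assumes g: "g \<in> arr G" and s: "global_arr s" and r: "global_arr r"
    and gs: "tgt G s = src G g" and gr: "tgt G r = tgt G g" and sr: "src G s = src G r"
    and b: "b \<in> D (src G s)"
  shows "stabilizes (cmp G (cmp G (ginv G r) g) s) b \<longleftrightarrow>
    al g (al s b * e (ginv G g)) = al r b * e g"
proof -
  \<comment> \<open>Both sides of the claim are the images under alpha_(r^-1), injective on S_(t g), of the two
    sides of the right-hand equation.\<close>
  define l where "l \<equiv> cmp G (cmp G (ginv G r) g) s"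
  have sa: "s \<in> arr G" and ra: "r \<in> arr G" using s r unfolding global_arr_def by auto
  have la: "l \<in> arr G" using sa ra g gs gr unfolding l_def by (simp add: arr_simps)
  have bs: "b \<in> D (ginv G s)" and br: "b \<in> D (ginv G r)"
    using b s r sr unfolding global_arr_def by auto
  have Dr: "D (ginv G (ginv G r)) = D (tgt G g)" using r gr ginv_ginv[OF ra] unfolding global_arr_def by simp
  note Dl = mem_D_ginv_conj_iff[OF g s r gs gr, folded l_def]
  have bl: "b * e (ginv G l) \<in> D (ginv G l)"
    using mult_mem_D_left[OF arr_ginv[OF la] e_mem_D[OF arr_ginv[OF la]]] .
  have "al l (b * e (ginv G l)) = al (ginv G r) (al g (al s (b * e (ginv G l))))"
    using al_conj[OF g s r gs gr, folded l_def] bl by blast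
  also have "al s (b * e (ginv G l)) = al s b * e (ginv G g)"
    using al_mult[OF sa bs] Dl e_mem_D[OF arr_ginv[OF la]] al_e_conj_ginv[OF g s r gs gr, folded l_def] by simp
  finally have lhs: "al l (b * e (ginv G l)) = al (ginv G r) (al g (al s b * e (ginv G g)))" .
  have rb: "al r b \<in> D (ginv G (ginv G r))" using al_mem_D[OF ra br] ginv_ginv[OF ra] by simp
  have eg: "e g \<in> D (ginv G (ginv G r))" using e_mem_D[OF g] D_subset_tgt[OF g] Dr by auto
  have rhs: "b * e l = al (ginv G r) (al r b * e g)"
    using al_mult[OF arr_ginv[OF ra] rb eg] al_ginv_al[OF ra br] al_ginv_e_conj[OF g s r gs gr, folded l_def]
    by simp
  have "al s b * e (ginv G g) \<in> D (ginv G g)"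
    using mult_mem_D_left[OF arr_ginv[OF g] e_mem_D[OF arr_ginv[OF g]]] .
  then have "al g (al s b * e (ginv G g)) \<in> D (ginv G (ginv G r))"
    using al_mem_D[OF g] D_subset_tgt[OF g] Dr by blast
  moreover have "al r b * e g \<in> D (ginv G (ginv G r))" using mult_mem_D_left[OF arr_ginv[OF arr_ginv[OF ra]] eg] .
  ultimately show ?thesis
    unfolding stabilizes_def l_def[symmetric] lhs rhs using al_inj[OF arr_ginv[OF ra]] by metis
qed

end

lemma internal_direct_sum_disjoint:
  assumes dsum: "internal_direct_sum Y D" and zero: "\<forall>v\<in>Y. 0 \<in> D v"
    and zw: "z \<in> Y" "w \<in> Y" "z \<noteq> w" and c: "c \<in> D z" "c \<in> D w"
  shows "c = 0"
proof -
  let ?f = "\<lambda>v. if v = z then c else 0" and ?f' = "\<lambda>v. if v = w then c else 0"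
  have f: "\<forall>v\<in>Y. ?f v \<in> D v" and f': "\<forall>v\<in>Y. ?f' v \<in> D v" using zero c by auto
  have sums: "(\<Sum>v\<in>Y. ?f v) = (\<Sum>v\<in>Y. ?f' v)"
    using zw by (cases "finite Y") (simp_all add: sum.delta')
  have "\<And>f f'. \<lbrakk>\<forall>v\<in>Y. f v \<in> D v; \<forall>v\<in>Y. f' v \<in> D v; sum f Y = sum f' Y\<rbrakk>
      \<Longrightarrow> \<forall>v\<in>Y. f v = f' v"
    using dsum unfolding internal_direct_sum_def by blast
  from bspec[OF this[OF f f' sums] zw(1)] show ?thesis using zw(3) by simp
qed

locale component_transversals = unital_partial_action G D al e
  for G :: "('g, 'b) groupoid_scheme" and D :: "'g \<Rightarrow> 'r::ring set" and al e +
  fixes H :: "'g set" and r :: nat and Y :: "nat \<Rightarrow> 'g set"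
    and y :: "nat \<Rightarrow> 'g" and tau :: "nat \<Rightarrow> 'g \<Rightarrow> 'g"
  assumes finite_objs: "finite (objs G)"
    and direct_sum: "internal_direct_sum (objs G) D"
    and e_nonzero: "\<forall>g\<in>arr G. e g \<noteq> 0"
    and H_wSub: "H \<in> wSub G D"
    and Y_components: "Y ` {1..r} = components G H"
    and base: "\<forall>j\<in>{1..r}. y j \<in> Y j \<and> tau j (y j) = y j"
    and transversal: "\<forall>j\<in>{1..r}. \<forall>z\<in>Y j. tau j z \<in> restr G H (Y j)
                    \<and> src G (tau j z) = y j \<and> tgt G (tau j z) = z
                    \<and> D (ginv G (tau j z)) = D (y j) \<and> D (tau j z) = D z"
begin

abbreviation "T \<equiv> fixed_ring H G al e UNIV"
abbreviation "vertex_group k \<equiv> {l \<in> restr G H (Y k). src G l = y k \<and> tgt G l = y k}"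
abbreviation "T_at k \<equiv> fixed_ring (vertex_group k) G al e (D (y k))"
abbreviation "tau_conj k g \<equiv> cmp G (cmp G (ginv G (tau k (tgt G g))) g) (tau k (src G g))"

lemma subgroupoid_H: "subgroupoid G H" and sub_objs_H: "sub_objs G H = objs G"
  using H_wSub unfolding wSub_def by simp_all

lemma
  assumes "h \<in> H"
  shows H_arr: "h \<in> arr G" and H_ginv: "ginv G h \<in> H"
  using subgroupoid_H assms unfolding subgroupoid_def by blast+

lemma H_cmp: "\<lbrakk>h \<in> H; k \<in> H; src G h = tgt G k\<rbrakk> \<Longrightarrow> cmp G h k \<in> H"
  using subgroupoid_H unfolding subgroupoid_def by blast

lemma Y_mem_components: "k \<in> {1..r} \<Longrightarrow> Y k \<in> components G H"
  using Y_components by blast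

lemma Y_subset_objs: "k \<in> {1..r} \<Longrightarrow> Y k \<subseteq> objs G"
  using components_subset[OF Y_mem_components] sub_objs_H by simp

lemma finite_Y: "k \<in> {1..r} \<Longrightarrow> finite (Y k)"
  using finite_objs Y_subset_objs finite_subset by blast

lemma tgt_in_Y: "\<lbrakk>k \<in> {1..r}; h \<in> H; src G h \<in> Y k\<rbrakk> \<Longrightarrow> tgt G h \<in> Y k"
  using component_tgt_closed[OF subgroupoid_H Y_mem_components] .

lemma src_in_Y: "\<lbrakk>k \<in> {1..r}; h \<in> H; tgt G h \<in> Y k\<rbrakk> \<Longrightarrow> src G h \<in> Y k"
  using component_src_closed[OF subgroupoid_H Y_mem_components] .

lemma obj_in_some_Y:
  assumes z: "z \<in> objs G"
  obtains k where "k \<in> {1..r}" "z \<in> Y k"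
proof -
  obtain C where "C \<in> components G H" "z \<in> C"
    using in_some_component[OF subgroupoid_H] z sub_objs_H by metis
  then show ?thesis using that Y_components by blast
qed

lemma
  assumes "k \<in> {1..r}" "z \<in> Y k"
  shows tau_in_H: "tau k z \<in> H" and src_tau: "src G (tau k z) = y k"
    and tgt_tau: "tgt G (tau k z) = z" and global_tau: "global_arr (tau k z)"
proof -
  have t: "tau k z \<in> restr G H (Y k)" "src G (tau k z) = y k" "tgt G (tau k z) = z"
    "D (ginv G (tau k z)) = D (y k)" "D (tau k z) = D z"
    using transversal assms by blast+
  then show "tau k z \<in> H" "src G (tau k z) = y k" "tgt G (tau k z) = z"
    unfolding restr_def by simp_all
  then show "global_arr (tau k z)" using t H_arr unfolding global_arr_def by simp
qed

lemma
  assumes k: "k \<in> {1..r}"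
  shows y_in_Y: "y k \<in> Y k" and tau_y: "tau k (y k) = y k" and y_in_objs: "y k \<in> objs G"
proof -
  show y: "y k \<in> Y k" "tau k (y k) = y k" using base k by blast+
  show "y k \<in> objs G" using y(1) Y_subset_objs[OF k] by blast
qed

lemma mult_e_obj:
  assumes "z \<in> objs G" "w \<in> objs G" "a \<in> D z"
  shows "a * e w = (if z = w then a else 0)"
proof (cases "z = w")
  case True then show ?thesis using assms mult_e_right objs_arr by simp
next
  case False
  have "\<forall>v\<in>objs G. 0 \<in> D v" using zero_mem_D objs_arr by blast
  moreover have "a * e w \<in> D z" "a * e w \<in> D w"
    using mult_mem_D_right[OF objs_arr[OF assms(1)] assms(3)]
      mult_mem_D_left[OF objs_arr[OF assms(2)] e_mem_D[OF objs_arr[OF assms(2)]]] by blast+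
  ultimately have "a * e w = 0" by (rule internal_direct_sum_disjoint[OF direct_sum _ assms(1,2) False])
  then show ?thesis using False by simp
qed

lemma e_tau:
  assumes "k \<in> {1..r}" "z \<in> Y k"
  shows "e (ginv G (tau k z)) = e (y k)" and "e (tau k z) = e z"
proof -
  have tau: "tau k z \<in> arr G" "D (ginv G (tau k z)) = D (y k)" "D (tau k z) = D z"
    using global_tau[OF assms] src_tau[OF assms] tgt_tau[OF assms] unfolding global_arr_def by auto
  have "y k \<in> arr G" "z \<in> arr G" using y_in_objs Y_subset_objs objs_arr assms by blast+
  then show "e (ginv G (tau k z)) = e (y k)" and "e (tau k z) = e z"
    using e_eqI arr_ginv tau by blast+
qed

lemma T_mult_e_obj:
  assumes t: "t \<in> T" and k: "k \<in> {1..r}" and z: "z \<in> Y k"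
  shows "t * e z = al (tau k z) (t * e (y k))"
proof -
  have "stabilizes (tau k z) t" using t tau_in_H[OF k z] unfolding mem_fixed_ring_iff by blast
  then show ?thesis using e_tau[OF k z] unfolding stabilizes_def by simp
qed

lemma tau_conj_loop:
  assumes k: "k \<in> {1..r}" and g: "g \<in> arr G" "src G g \<in> Y k" "tgt G g \<in> Y k"
  shows "tau_conj k g \<in> arr G" "src G (tau_conj k g) = y k" "tgt G (tau_conj k g) = y k"
  using global_tau[OF k g(2)] global_tau[OF k g(3)] src_tau[OF k] tgt_tau[OF k] g
  unfolding global_arr_def by (simp_all add: arr_simps)

lemma tau_conj_in_vertex_group:
  assumes k: "k \<in> {1..r}" and h: "h \<in> H" "src G h \<in> Y k"
  shows "tau_conj k h \<in> vertex_group k"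
proof -
  have tgt: "tgt G h \<in> Y k" using tgt_in_Y[OF k h] .
  have r: "tau k (tgt G h) \<in> arr G" using H_arr tau_in_H[OF k tgt] by blast
  have rh: "src G (ginv G (tau k (tgt G h))) = tgt G h" using src_ginv[OF r] tgt_tau[OF k tgt] by simp
  have "cmp G (ginv G (tau k (tgt G h))) h \<in> H"
    using H_cmp[OF H_ginv[OF tau_in_H[OF k tgt]] h(1) rh] .
  moreover have "src G (cmp G (ginv G (tau k (tgt G h))) h) = tgt G (tau k (src G h))"
    using src_cmp[OF arr_ginv[OF r] H_arr[OF h(1)] rh] tgt_tau[OF k h(2)] by simp
  ultimately have "tau_conj k h \<in> H" using H_cmp tau_in_H[OF k h(2)] by blast
  then show ?thesis
    using tau_conj_loop[OF k H_arr[OF h(1)] h(2) tgt] y_in_Y[OF k] unfolding restr_def by simp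
qed

lemma stabilizes_iff_tau_conj:
  assumes k: "k \<in> {1..r}" and g: "g \<in> arr G" "src G g \<in> Y k" "tgt G g \<in> Y k"
    and a_src: "a * e (src G g) = al (tau k (src G g)) (a * e (y k))"
    and a_tgt: "a * e (tgt G g) = al (tau k (tgt G g)) (a * e (y k))"
  shows "stabilizes g a \<longleftrightarrow> stabilizes (tau_conj k g) (a * e (y k))"
proof -
  have "a * e (y k) \<in> D (y k)" using mult_mem_D_left e_mem_D objs_arr y_in_objs[OF k] by simp
  then have "stabilizes (tau_conj k g) (a * e (y k)) \<longleftrightarrow>
      al g (al (tau k (src G g)) (a * e (y k)) * e (ginv G g)) = al (tau k (tgt G g)) (a * e (y k)) * e g"
    by (intro stabilizes_conj_iff[OF g(1) global_tau[OF k g(2)] global_tau[OF k g(3)]])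
      (simp_all add: tgt_tau[OF k g(2)] tgt_tau[OF k g(3)] src_tau[OF k g(2)] src_tau[OF k g(3)])
  then show ?thesis unfolding stabilizes_iff_local[OF g(1)] a_src a_tgt by simp
qed

lemma T_mult_e_y_mem_T_at:
  assumes t: "t \<in> T" and k: "k \<in> {1..r}"
  shows "t * e (y k) \<in> T_at k"
proof -
  have "stabilizes l (t * e (y k))" if l: "l \<in> vertex_group k" for l
  proof -
    have "l \<in> H" "l \<in> arr G" using l H_arr unfolding restr_def by auto
    then show ?thesis using t l stabilizes_loop_mult_e unfolding mem_fixed_ring_iff by simp
  qed
  moreover have "t * e (y k) \<in> D (y k)" using mult_mem_D_left e_mem_D objs_arr y_in_objs[OF k] by simp
  ultimately show ?thesis unfolding mem_fixed_ring_iff by blast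
qed

lemma e_y_mem_T_at: "k \<in> {1..r} \<Longrightarrow> e (y k) \<in> T_at k"
  unfolding mem_fixed_ring_iff restr_def
  using stabilizes_loop_e H_arr e_mem_D objs_arr y_in_objs by auto

text \<open>Inverts t \<mapsto> t * e (y k) on the elements of T supported on Y k.\<close>

definition extension :: "nat \<Rightarrow> 'r \<Rightarrow> 'r" where
  "extension k b = (\<Sum>z\<in>Y k. al (tau k z) b)"

lemma extension_mult_e:
  assumes k: "k \<in> {1..r}" and b: "b \<in> D (y k)" and w: "w \<in> objs G"
  shows "extension k b * e w = (if w \<in> Y k then al (tau k w) b else 0)"
proof -
  have "al (tau k z) b * e w = (if z = w then al (tau k w) b else 0)" if z: "z \<in> Y k" for z
  proof -
    have "al (tau k z) b \<in> D z"
      using al_mem_D[of "tau k z" b] global_tau[OF k z] src_tau[OF k z] tgt_tau[OF k z] b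
      unfolding global_arr_def by simp
    then show ?thesis using mult_e_obj Y_subset_objs[OF k] z w by auto
  qed
  then have "extension k b * e w = (\<Sum>z\<in>Y k. if z = w then al (tau k w) b else 0)"
    unfolding extension_def sum_distrib_right by (rule sum.cong[OF refl])
  then show ?thesis using finite_Y[OF k] by simp
qed

lemma extension_mult_e_y: "\<lbrakk>k \<in> {1..r}; b \<in> D (y k)\<rbrakk> \<Longrightarrow> extension k b * e (y k) = b"
  using extension_mult_e y_in_objs y_in_Y tau_y al_obj by simp

lemma extension_mem_T:
  assumes k: "k \<in> {1..r}" and b: "b \<in> T_at k"
  shows "extension k b \<in> T"
proof -
  have bD: "b \<in> D (y k)" using b unfolding mem_fixed_ring_iff by blast
  have "stabilizes h (extension k b)" if h: "h \<in> H" for h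
  proof (cases "src G h \<in> Y k")
    case True
    have tgt: "tgt G h \<in> Y k" using tgt_in_Y[OF k h True] .
    have "stabilizes (tau_conj k h) b"
      using b tau_conj_in_vertex_group[OF k h True] unfolding mem_fixed_ring_iff by blast
    then show ?thesis
      using stabilizes_iff_tau_conj[OF k H_arr[OF h] True tgt] extension_mult_e[OF k bD]
        extension_mult_e_y[OF k bD] src_in_objs tgt_in_objs H_arr[OF h] True tgt by simp
  next
    case False
    then have "tgt G h \<notin> Y k" using src_in_Y[OF k h] by blast
    then show ?thesis
      using stabilizes_iff_local[OF H_arr[OF h]] extension_mult_e[OF k bD] src_in_objs tgt_in_objs
        H_arr[OF h] False al_zero by simp
  qed
  then show ?thesis unfolding mem_fixed_ring_iff by blast
qed

lemma tgt_in_Y_if_stabilizes_T: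
  assumes g: "g \<in> stab_arr G al e T" and k: "k \<in> {1..r}" and src: "src G g \<in> Y k"
  shows "tgt G g \<in> Y k"
proof (rule ccontr)
  assume tgt: "tgt G g \<notin> Y k"
  let ?t = "extension k (e (y k))"
  have ga: "g \<in> arr G" using g unfolding mem_stab_arr_iff by blast
  have eD: "e (y k) \<in> D (y k)" using e_mem_D objs_arr y_in_objs[OF k] by blast
  have "stabilizes g ?t" using g extension_mem_T[OF k e_y_mem_T_at[OF k]] unfolding mem_stab_arr_iff by blast
  moreover have "?t * e (src G g) = e (src G g)"
    using extension_mult_e[OF k eD] src_in_objs[OF ga] src al_e[OF H_arr[OF tau_in_H[OF k src]]] e_tau[OF k src]
    by simp
  moreover have "?t * e (tgt G g) = 0" using extension_mult_e[OF k eD] tgt_in_objs[OF ga] tgt by simp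
  ultimately have "e g = 0"
    using stabilizes_iff_local[OF ga] al_e[OF ga] e_mult_e_subset arr_src arr_ginv D_ginv_subset_src ga
    by simp
  then show False using e_nonzero ga by blast
qed

lemma stab_arr_T_iff:
  assumes g: "g \<in> arr G"
  shows "g \<in> stab_arr G al e T \<longleftrightarrow>
    (\<exists>k\<in>{1..r}. src G g \<in> Y k \<and> tgt G g \<in> Y k \<and> tau_conj k g \<in> stab_iso G al e (y k) (T_at k))"
  (is "_ \<longleftrightarrow> ?conj")
proof
  assume gT: "g \<in> stab_arr G al e T"
  obtain k where k: "k \<in> {1..r}" and src: "src G g \<in> Y k" using obj_in_some_Y[OF src_in_objs[OF g]] .
  have tgt: "tgt G g \<in> Y k" using tgt_in_Y_if_stabilizes_T[OF gT k src] .
  have "stabilizes (tau_conj k g) b" if b: "b \<in> T_at k" for b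
  proof -
    have bD: "b \<in> D (y k)" using b unfolding mem_fixed_ring_iff by blast
    have "stabilizes g (extension k b)"
      using gT extension_mem_T[OF k b] unfolding mem_stab_arr_iff by blast
    then show ?thesis
      using stabilizes_iff_tau_conj[OF k g src tgt] extension_mult_e[OF k bD] extension_mult_e_y[OF k bD]
        src_in_objs[OF g] tgt_in_objs[OF g] src tgt by simp
  qed
  then show ?conj
    using k src tgt tau_conj_loop[OF k g src tgt] unfolding mem_stab_iso_iff by blast
next
  assume ?conj
  then obtain k where k: "k \<in> {1..r}" and src: "src G g \<in> Y k" and tgt: "tgt G g \<in> Y k"
    and conj: "tau_conj k g \<in> stab_iso G al e (y k) (T_at k)" by blast
  have "stabilizes g t" if t: "t \<in> T" for t
    using stabilizes_iff_tau_conj[OF k g src tgt] T_mult_e_obj[OF t k src] T_mult_e_obj[OF t k tgt]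
      conj T_mult_e_y_mem_T_at[OF t k] unfolding mem_stab_iso_iff by blast
  then show "g \<in> stab_arr G al e T" using g unfolding mem_stab_arr_iff by blast
qed

end

theorem lemma4p2:
  fixes G :: "'g groupoid"
    and D :: "'g \<Rightarrow> 'r::ring set" and al :: "'g \<Rightarrow> 'r \<Rightarrow> 'r" and e :: "'g \<Rightarrow> 'r"
    and H :: "'g set" and r :: nat and Y :: "nat \<Rightarrow> 'g set"
    and y :: "nat \<Rightarrow> 'g" and tau :: "nat \<Rightarrow> 'g \<Rightarrow> 'g"
  assumes grpd: "is_groupoid G" and fin: "finite (arr G)" and conn: "connected_groupoid G"
    and pa: "partial_action G D al"
    and unital: "unital_pa G D e"
    and dsum: "internal_direct_sum (objs G) D"
    and gtype: "group_type_conn G (arr G) (objs G) D"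
    and nz: "\<forall>g\<in>arr G. e g \<noteq> 0"
    and H: "H \<in> wSub G D"
    and comps: "Y ` {1..r} = components G H" and Yinj: "inj_on Y {1..r}"
    and base: "\<forall>j\<in>{1..r}. y j \<in> Y j \<and> tau j (y j) = y j"
    and transv: "\<forall>j\<in>{1..r}. \<forall>z\<in>Y j. tau j z \<in> restr G H (Y j)
                    \<and> src G (tau j z) = y j \<and> tgt G (tau j z) = z
                    \<and> D (ginv G (tau j z)) = D (y j) \<and> D (tau j z) = D z"
  shows "\<forall>g\<in>arr G.
     g \<in> stab_arr G al e (fixed_ring H G al e UNIV) \<longleftrightarrow>
     (\<exists>k\<in>{1..r}. src G g \<in> Y k \<and> tgt G g \<in> Y k \<and>
        cmp G (cmp G (ginv G (tau k (tgt G g))) g) (tau k (src G g))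
          \<in> stab_iso G al e (y k)
               (fixed_ring {l \<in> restr G H (Y k). src G l = y k \<and> tgt G l = y k} G al e (D (y k))))"
proof -
  have "finite (objs G)" using fin unfolding objs_def by simp
  then interpret component_transversals G D al e H r Y y tau
    using grpd pa unital dsum nz H comps base transv by unfold_locales
  show ?thesis using stab_arr_T_iff by blast
qed

end
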